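(* Let $f$ be a polynomial of degree at least two with positive integer coefficients. If $D$ is a Siegel disk of $f$, then $D$ is disjoint from $f^{-m}(\mathbb{Z}[i])=\{z: f^m(z)\in\mathbb{Z}[i]\}$ for every non-negative integer $m$, where $\mathbb{Z}[i]=\{a+ib: a,b\in\mathbb{Z}\}$.
   Context: The Fatou set $F(f)$ of a polynomial $f$ is the complement of its Julia set (the boundary of the set of points with bounded forward orbit). A Siegel disk is a periodic Fatou component $D$ (with $f^p(D)\subseteq D$) on which $f^p$ is analytically conjugate to an irrational Euclidean rotation of the unit disk. $f^m$ denotes the $m$-th iterate. *)

theory Defs
  imports "HOL-Complex_Analysis.Complex_Analysis" "HOL-Computational_Algebra.Polynomial"
begin

definition filled_julia :: "(complex \<Rightarrow> complex) \<Rightarrow> complex set" where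
  "filled_julia f = {z. bounded (range (\<lambda>n. (f ^^ n) z))}"

definition julia_set :: "(complex \<Rightarrow> complex) \<Rightarrow> complex set" where
  "julia_set f = frontier (filled_julia f)"

definition fatou_set :: "(complex \<Rightarrow> complex) \<Rightarrow> complex set" where
  "fatou_set f = - julia_set f"

definition fatou_component :: "(complex \<Rightarrow> complex) \<Rightarrow> complex set \<Rightarrow> bool" where
  "fatou_component f D \<longleftrightarrow> (\<exists>z \<in> fatou_set f. D = connected_component_set (fatou_set f) z)"

definition siegel_disk :: "(complex \<Rightarrow> complex) \<Rightarrow> complex set \<Rightarrow> bool" where
  "siegel_disk f D \<longleftrightarrow> fatou_component f D \<and>
     (\<exists>p::nat. p \<ge> 1 \<and> (f ^^ p) ` D \<subseteq> D \<and>
       (\<exists>\<phi> \<theta>. \<phi> holomorphic_on D \<and> bij_betw \<phi> D (ball 0 1) \<and>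
              (inv_into D \<phi>) holomorphic_on (ball 0 1) \<and>
              (\<theta>::real) \<notin> \<rat> \<and>
              (\<forall>z\<in>D. \<phi> ((f ^^ p) z) = exp (2 * pi * \<i> * complex_of_real \<theta>) * \<phi> z)))"

definition gaussian_ints :: "complex set" where
  "gaussian_ints = {z. Re z \<in> \<int> \<and> Im z \<in> \<int>}"

end

theory Submission
  imports Defs
begin

text \<open>
  Let \<open>z\<close> lie in the Siegel disk \<open>D\<close> with return map \<open>G = f\<^sup>p\<close>, linearized by \<open>\<phi>\<close> to the
  rotation \<open>w \<mapsto> c w\<close>. The \<open>G\<close>-orbit of \<open>z\<close> lies on the compact curve
  \<open>\<phi>\<^sup>-\<^sup>1\<close>(circle of radius \<open>|\<phi> z|\<close>), hence is bounded. If \<open>f\<^sup>m(z)\<close> is a Gaussian integer,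
  so is every later iterate, since \<open>f\<close> has integer coefficients; a bounded set of Gaussian integers
  is finite, so the orbit repeats. An irrational rotation has no periodic points besides its centre,
  so \<open>z\<close> is the fixed point \<open>\<phi>\<^sup>-\<^sup>1(0)\<close> and is itself a Gaussian integer. Its multiplier
  \<open>G'(z)\<close> is then a Gaussian integer, but conjugacy forces \<open>G'(z) = c\<close> with \<open>|c| = 1\<close>, so \<open>c\<^sup>4 = 1\<close>,
  contradicting irrationality. Only integrality of the coefficients of \<open>f\<close> is used.
\<close>

lemma gaussian_ints_mult [intro]: "a \<in> gaussian_ints \<Longrightarrow> b \<in> gaussian_ints \<Longrightarrow> a * b \<in> gaussian_ints"
  by (auto simp: gaussian_ints_def)

lemma of_nat_in_gaussian_ints [intro]: "of_nat n \<in> gaussian_ints"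
  by (auto simp: gaussian_ints_def)

lemma gaussian_ints_power [intro]: "a \<in> gaussian_ints \<Longrightarrow> a ^ n \<in> gaussian_ints"
  by (induction n) (auto simp: gaussian_ints_def)

lemma gaussian_ints_sum [intro]: "(\<And>i. i \<in> A \<Longrightarrow> h i \<in> gaussian_ints) \<Longrightarrow> sum h A \<in> gaussian_ints"
  by (auto simp: gaussian_ints_def Re_sum Im_sum)

lemma gaussian_ints_prod [intro]: "(\<And>i. i \<in> A \<Longrightarrow> h i \<in> gaussian_ints) \<Longrightarrow> prod h A \<in> gaussian_ints"
  by (induction A rule: infinite_finite_induct) (auto simp: gaussian_ints_def)

lemma poly_in_gaussian_ints:
  "(\<And>k. coeff g k \<in> gaussian_ints) \<Longrightarrow> x \<in> gaussian_ints \<Longrightarrow> poly g x \<in> gaussian_ints"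
  unfolding poly_altdef by blast

lemma poly_image_gaussian_ints:
  "(\<And>k. coeff g k \<in> gaussian_ints) \<Longrightarrow> poly g ` gaussian_ints \<subseteq> gaussian_ints"
  using poly_in_gaussian_ints by blast

lemma finite_bounded_Int_gaussian_ints:
  assumes "bounded A"
  shows "finite (A \<inter> gaussian_ints)"
proof -
  obtain R where R: "\<And>z. z \<in> A \<Longrightarrow> norm z \<le> R"
    using assms by (meson bounded_iff)
  define I where "I = {x \<in> \<int>. \<bar>x\<bar> \<le> R}"
  have "A \<inter> gaussian_ints \<subseteq> (\<lambda>(a, b). Complex a b) ` (I \<times> I)"
  proof
    fix z assume z: "z \<in> A \<inter> gaussian_ints"
    then have "\<bar>Re z\<bar> \<le> R" "\<bar>Im z\<bar> \<le> R"
      using R abs_Re_le_cmod abs_Im_le_cmod by (blast intro: order_trans)+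
    with z have "(Re z, Im z) \<in> I \<times> I"
      by (simp add: I_def gaussian_ints_def)
    then show "z \<in> (\<lambda>(a, b). Complex a b) ` (I \<times> I)"
      by (auto intro: image_eqI[where x = "(Re z, Im z)"])
  qed
  moreover have "finite I"
    unfolding I_def by (rule finite_abs_int_segment)
  ultimately show ?thesis
    by (meson finite_SigmaI finite_imageI finite_subset)
qed

lemma gaussian_int_unit_power_4:
  assumes "d \<in> gaussian_ints" and "norm d = 1"
  shows "d ^ 4 = 1"
proof -
  obtain a b :: int where d: "d = Complex a b"
    using assms(1) by (metis complex_surj gaussian_ints_def mem_Collect_eq Ints_cases)
  have "a\<^sup>2 + b\<^sup>2 = 1"
    using assms(2) unfolding d cmod_def by (simp flip: of_int_power of_int_add)
  then have "a\<^sup>2 \<le> 1" "b\<^sup>2 \<le> 1"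
    by (smt (verit) zero_le_power2)+
  then have "a \<in> {-1, 0, 1}" "b \<in> {-1, 0, 1}"
    by (auto simp: abs_square_le_1 abs_le_iff)
  with \<open>a\<^sup>2 + b\<^sup>2 = 1\<close> show ?thesis
    by (auto simp: d complex_eq_iff numeral_eq_Suc)
qed

lemma irrational_rotation_power_ne_1:
  fixes \<theta> :: real
  assumes "\<theta> \<notin> \<rat>" and "q > 0"
  shows "exp (2 * pi * \<i> * of_real \<theta>) ^ q \<noteq> 1"
proof
  assume "exp (2 * pi * \<i> * of_real \<theta>) ^ q = 1"
  then have "exp (of_nat q * (2 * pi * \<i> * of_real \<theta>)) = 1"
    by (simp add: exp_of_nat_mult)
  then obtain n :: int where "2 * pi * real q * \<theta> = of_int (2 * n) * pi"
    by (auto simp: exp_eq_1)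
  then have "\<theta> = of_int n / of_nat q"
    using assms(2) by (simp add: field_simps)
  with assms(1) show False
    by simp
qed

lemma funpow_eventually_in_invariant:
  assumes "F ` S \<subseteq> S" and "(F ^^ m) x \<in> S" and "m \<le> n"
  shows "(F ^^ n) x \<in> S"
proof -
  have "(F ^^ j) y \<in> S" if "y \<in> S" for j y
    using that assms(1) by (induction j) auto
  moreover have "(F ^^ n) x = (F ^^ (n - m)) ((F ^^ m) x)"
    using assms(3) by (metis funpow_add le_add_diff_inverse2 o_apply)
  ultimately show ?thesis
    using assms(2) by simp
qed

lemma has_field_derivative_funpow:
  assumes "\<And>y. (F has_field_derivative F' y) (at y)"
  shows "((F ^^ n) has_field_derivative (\<Prod>j<n. F' ((F ^^ j) x))) (at x)"
proof (induction n)
  case 0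
  show ?case
    by (simp add: id_def)
next
  case (Suc n)
  have "((F \<circ> F ^^ n) has_field_derivative F' ((F ^^ n) x) * (\<Prod>j<n. F' ((F ^^ j) x))) (at x)"
    by (rule DERIV_chain[OF assms Suc.IH])
  then show ?case
    by (simp add: comp_def mult.commute)
qed

lemma poly_funpow_derivative_in_gaussian_ints:
  fixes f :: "complex poly"
  assumes coeffs: "\<And>k. coeff f k \<in> gaussian_ints" and x: "x \<in> gaussian_ints"
  obtains d where "d \<in> gaussian_ints" "((poly f ^^ n) has_field_derivative d) (at x)"
proof
  have "(poly f ^^ j) x \<in> gaussian_ints" for j
    using funpow_eventually_in_invariant[OF poly_image_gaussian_ints[OF coeffs], of 0 x j] x by simp
  moreover have "coeff (pderiv f) k \<in> gaussian_ints" for k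
    using coeffs by (auto simp: coeff_pderiv simp del: of_nat_Suc)
  ultimately show "(\<Prod>j<n. poly (pderiv f) ((poly f ^^ j) x)) \<in> gaussian_ints"
    by (blast intro: poly_in_gaussian_ints)
  show "((poly f ^^ n) has_field_derivative (\<Prod>j<n. poly (pderiv f) ((poly f ^^ j) x))) (at x)"
    by (rule has_field_derivative_funpow[OF poly_DERIV])
qed

lemma funpow_conjugate:
  fixes \<phi> :: "'a \<Rightarrow> 'b::monoid_mult"
  assumes "G ` D \<subseteq> D" and "\<And>x. x \<in> D \<Longrightarrow> \<phi> (G x) = c * \<phi> x" and "z \<in> D"
  shows "(G ^^ k) z \<in> D \<and> \<phi> ((G ^^ k) z) = c ^ k * \<phi> z"
  using assms by (induction k) (simp_all add: mult.assoc image_subset_iff)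

lemma rotation_orbit_bounded:
  fixes \<phi> :: "'a::metric_space \<Rightarrow> complex"
  assumes "bij_betw \<phi> D (ball 0 1)" and "continuous_on (ball 0 1) (inv_into D \<phi>)"
    and "G ` D \<subseteq> D" and "\<And>x. x \<in> D \<Longrightarrow> \<phi> (G x) = c * \<phi> x" and "norm c = 1" and "z \<in> D"
  shows "bounded (range (\<lambda>k. (G ^^ k) z))"
proof -
  have "norm (\<phi> z) < 1"
    using assms(1,6) bij_betwE by fastforce
  then have "compact (inv_into D \<phi> ` cball 0 (norm (\<phi> z)))"
    using assms(2) by (intro compact_continuous_image continuous_on_subset[OF assms(2)]) auto
  moreover have "(G ^^ k) z \<in> inv_into D \<phi> ` cball 0 (norm (\<phi> z))" for k
  proof
    have "(G ^^ k) z \<in> D" "\<phi> ((G ^^ k) z) = c ^ k * \<phi> z"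
      using funpow_conjugate[of G D \<phi> c z] assms(3,4,6) by auto
    then show "(G ^^ k) z = inv_into D \<phi> (c ^ k * \<phi> z)"
      using assms(1) by (metis bij_betw_imp_inj_on inv_into_f_f)
    show "c ^ k * \<phi> z \<in> cball 0 (norm (\<phi> z))"
      by (simp add: norm_mult norm_power assms(5))
  qed
  ultimately show ?thesis
    by (meson bounded_subset compact_imp_bounded image_subsetI)
qed

lemma rotation_finite_orbit_imp_fixpoint:
  fixes \<phi> :: "'a \<Rightarrow> complex"
  assumes "inj_on \<phi> D" and "G ` D \<subseteq> D" and "\<And>x. x \<in> D \<Longrightarrow> \<phi> (G x) = c * \<phi> x"
    and "c \<noteq> 0" and "\<And>q. q > 0 \<Longrightarrow> c ^ q \<noteq> 1" and "z \<in> D"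
    and "finite ((\<lambda>k. (G ^^ k) z) ` {m..})"
  shows "G z = z"
proof -
  have orbit: "\<phi> ((G ^^ k) z) = c ^ k * \<phi> z" for k
    using funpow_conjugate[of G D \<phi> c z] assms(2,3,6) by blast
  have "\<not> inj_on (\<lambda>k. (G ^^ k) z) {m..}"
    using assms(7) finite_imageD infinite_Ici by blast
  then obtain k l where "k < l" "(G ^^ k) z = (G ^^ l) z"
    unfolding inj_on_def by (metis linorder_neqE_nat)
  then have "c ^ k * (c ^ (l - k) - 1) * \<phi> z = 0"
    using orbit[of k] orbit[of l] by (simp add: algebra_simps flip: power_add)
  with assms(4,5) \<open>k < l\<close> have "\<phi> z = 0"
    by simp
  then have "\<phi> (G z) = \<phi> z"
    using assms(3,6) by simp
  then show "G z = z"
    using assms(1,2,6) by (meson image_subset_iff inj_onD)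
qed

lemma linearization_multiplier:
  assumes \<phi>: "\<phi> holomorphic_on D" "inj_on \<phi> D" and "open D" and "z \<in> D"
    and "G z = z" and "\<And>x. x \<in> D \<Longrightarrow> \<phi> (G x) = c * \<phi> x"
    and G: "(G has_field_derivative d) (at z)"
  shows "d = c"
proof -
  have \<phi>': "(\<phi> has_field_derivative deriv \<phi> z) (at z)"
    using \<phi>(1) \<open>open D\<close> \<open>z \<in> D\<close> by (rule holomorphic_derivI)
  have "((\<phi> \<circ> G) has_field_derivative deriv \<phi> z * d) (at z)"
    using DERIV_chain[OF _ G] \<phi>' \<open>G z = z\<close> by simp
  then have "((\<lambda>x. c * \<phi> x) has_field_derivative deriv \<phi> z * d) (at z)"
    by (rule has_field_derivative_transform_within_open[OF _ \<open>open D\<close> \<open>z \<in> D\<close>]) (simp add: assms(6))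
  moreover have "((\<lambda>x. c * \<phi> x) has_field_derivative c * deriv \<phi> z) (at z)"
    by (rule DERIV_cmult[OF \<phi>'])
  ultimately have "deriv \<phi> z * d = c * deriv \<phi> z"
    by (rule DERIV_unique)
  moreover have "deriv \<phi> z \<noteq> 0"
    using \<phi>(1) \<open>open D\<close> \<phi>(2) \<open>z \<in> D\<close> by (rule holomorphic_injective_imp_regular)
  ultimately show ?thesis
    by (simp add: mult.commute)
qed

definition linearizes_to_irrational_rotation ::
    "(complex \<Rightarrow> complex) \<Rightarrow> complex set \<Rightarrow> (complex \<Rightarrow> complex) \<Rightarrow> complex \<Rightarrow> bool" where
  "linearizes_to_irrational_rotation \<phi> D G c \<longleftrightarrow>
     \<phi> holomorphic_on D \<and> bij_betw \<phi> D (ball 0 1) \<and> continuous_on (ball 0 1) (inv_into D \<phi>) \<and>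
     G ` D \<subseteq> D \<and> (\<forall>x\<in>D. \<phi> (G x) = c * \<phi> x) \<and> norm c = 1 \<and> (\<forall>q>0. c ^ q \<noteq> 1)"

lemma linearized_eventually_gaussian_imp_fixpoint:
  assumes lin: "linearizes_to_irrational_rotation \<phi> D G c" and "z \<in> D"
    and tail: "\<And>k. k \<ge> m \<Longrightarrow> (G ^^ k) z \<in> gaussian_ints"
  shows "G z = z" and "z \<in> gaussian_ints"
proof -
  note lin' = lin[unfolded linearizes_to_irrational_rotation_def]
  have "bounded (range (\<lambda>k. (G ^^ k) z))"
    using rotation_orbit_bounded[of \<phi> D G c z] lin' \<open>z \<in> D\<close> by blast
  then have "finite (range (\<lambda>k. (G ^^ k) z) \<inter> gaussian_ints)"
    by (rule finite_bounded_Int_gaussian_ints)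
  then have "finite ((\<lambda>k. (G ^^ k) z) ` {m..})"
    by (rule finite_subset[rotated]) (auto intro: tail)
  moreover have "c \<noteq> 0"
    using lin' by auto
  ultimately show "G z = z"
    using rotation_finite_orbit_imp_fixpoint[of \<phi> D G c z m] lin' \<open>z \<in> D\<close>
    by (auto simp: bij_betw_def)
  then have "(G ^^ m) z = z"
    by (induction m) simp_all
  with tail[of m] show "z \<in> gaussian_ints"
    by simp
qed

lemma fatou_component_open: "fatou_component f D \<Longrightarrow> open D"
  unfolding fatou_component_def fatou_set_def julia_set_def
  by (auto intro: open_connected_component)

lemma siegel_diskE:
  assumes "siegel_disk F D"
  obtains p \<phi> c where "p \<ge> 1" and "open D" and "linearizes_to_irrational_rotation \<phi> D (F ^^ p) c"
proof -
  obtain p \<phi> \<theta> where "p \<ge> 1" "(F ^^ p) ` D \<subseteq> D" "\<phi> holomorphic_on D" "bij_betw \<phi> D (ball 0 1)"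
      and inverse: "inv_into D \<phi> holomorphic_on ball 0 1" and "\<theta> \<notin> \<rat>"
      and "\<forall>x\<in>D. \<phi> ((F ^^ p) x) = exp (2 * pi * \<i> * of_real \<theta>) * \<phi> x"
    using assms unfolding siegel_disk_def by blast
  moreover have "open D"
    using assms fatou_component_open unfolding siegel_disk_def by blast
  moreover note holomorphic_on_imp_continuous_on[OF inverse]
    irrational_rotation_power_ne_1[OF \<open>\<theta> \<notin> \<rat>\<close>]
  ultimately show ?thesis
    using that[of p \<phi> "exp (2 * pi * \<i> * of_real \<theta>)"]
    by (simp add: linearizes_to_irrational_rotation_def)
qed

theorem lemma2p9:
  fixes f :: "complex poly" and D :: "complex set"
  assumes "degree f \<ge> 2"
    and "\<forall>k \<le> degree f. \<exists>n::nat. n > 0 \<and> coeff f k = of_nat n"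
    and "siegel_disk (poly f) D"
  shows "\<forall>m::nat. D \<inter> {z. ((poly f) ^^ m) z \<in> gaussian_ints} = {}"
proof (intro allI equals0I)
  fix m z
  assume "z \<in> D \<inter> {z. ((poly f) ^^ m) z \<in> gaussian_ints}"
  then have z: "z \<in> D" and w: "(poly f ^^ m) z \<in> gaussian_ints"
    by auto
  have coeffs: "coeff f k \<in> gaussian_ints" for k
    using assms(2) by (metis coeff_eq_0 leI of_nat_0 of_nat_in_gaussian_ints)
  obtain p \<phi> c where "p \<ge> 1" "open D" and lin: "linearizes_to_irrational_rotation \<phi> D (poly f ^^ p) c"
    using assms(3) by (rule siegel_diskE)
  have tail: "((poly f ^^ p) ^^ k) z \<in> gaussian_ints" if "k \<ge> m" for k
  proof -
    have "m \<le> p * k"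
      using \<open>p \<ge> 1\<close> that by (metis le_trans mult_1 mult_le_mono1)
    with poly_image_gaussian_ints[OF coeffs] w show ?thesis
      unfolding funpow_mult by (rule funpow_eventually_in_invariant)
  qed
  obtain d where "d \<in> gaussian_ints" and d: "((poly f ^^ p) has_field_derivative d) (at z)"
    using poly_funpow_derivative_in_gaussian_ints[OF coeffs]
      linearized_eventually_gaussian_imp_fixpoint(2)[OF lin z tail] by metis
  moreover have "d = c"
    using linearization_multiplier[OF _ _ \<open>open D\<close> z _ _ d] lin
      linearized_eventually_gaussian_imp_fixpoint(1)[OF lin z tail]
    by (auto simp: linearizes_to_irrational_rotation_def bij_betw_def)
  ultimately have "c ^ 4 = 1"
    using gaussian_int_unit_power_4 lin by (auto simp: linearizes_to_irrational_rotation_def)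
  with lin show False
    by (simp add: linearizes_to_irrational_rotation_def)
qed

end
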